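(* Let $N\ge3$, $h>0$, and let $D$ be the periodic second-order central difference matrix ($D_{k,k+1}=\tfrac1{2h}$, $D_{k,k-1}=-\tfrac1{2h}$, indices mod $N$, all other entries zero). Let $J(\mathbf u)$ be the Jacobian of $\mathcal R_k(\mathbf u)=-2\sum_jD_{kj}F^\star_{\log}(u_k,u_j)$ with the logarithmic mean $F^\star_{\log}(u,v)=(v-u)/(\log v-\log u)$. Fix an index $i$, constants $\delta_+,\delta_->0$ with $\delta_+\ne\delta_-$, and constants $U_k>0$ for $k\notin\{i-1,i,i+1\}$. For $\varepsilon>0$ define $u^\varepsilon_i=\varepsilon$, $u^\varepsilon_{i\pm1}=\delta_\pm h+\varepsilon$, and $u^\varepsilon_k=U_k+\varepsilon$ otherwise. Then $|\operatorname{tr}(J(\mathbf u^\varepsilon)^2)|\to\infty$ and hence the spectral radius $\rho(J(\mathbf u^\varepsilon))\ge\sqrt{|\operatorname{tr}(J^2)|/N}\to\infty$ as $\varepsilon\to0^+$.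
   Context: The Jacobian is $J_{ik}=-2D_{ik}\partial_2F^\star(u_i,u_k)-2\delta_{ik}\sum_jD_{ij}\partial_1F^\star(u_i,u_j)$; explicitly with $r_j=u_j/u_i$, $J_{ij}=-2D_{ij}\frac{\log r_j-1+1/r_j}{\log^2 r_j}$ for $i\ne j$ and $J_{ii}=-2\sum_{k\ne i}D_{ik}\frac{r_k-\log r_k-1}{\log^2r_k}$. *)

theory Defs
  imports "HOL-Analysis.Derivative" "Jordan_Normal_Form.Spectral_Radius"
begin

definition logmean :: "real \<Rightarrow> real \<Rightarrow> real" where
  "logmean u v = (if u = v then u else (v - u) / (ln v - ln u))"

definition Dmat :: "nat \<Rightarrow> real \<Rightarrow> nat \<Rightarrow> nat \<Rightarrow> real" where
  "Dmat N h k j =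
     (if j = (k + 1) mod N then 1 / (2 * h)
      else if j = (k + N - 1) mod N then - 1 / (2 * h) else 0)"

definition Rres :: "nat \<Rightarrow> real \<Rightarrow> (nat \<Rightarrow> real) \<Rightarrow> nat \<Rightarrow> real" where
  "Rres N h u k = - 2 * (\<Sum>j<N. Dmat N h k j * logmean (u k) (u j))"

definition jac_entry :: "nat \<Rightarrow> real \<Rightarrow> (nat \<Rightarrow> real) \<Rightarrow> nat \<Rightarrow> nat \<Rightarrow> real" where
  "jac_entry N h u k l = deriv (\<lambda>t. Rres N h (u(l := t)) k) (u l)"

definition jac :: "nat \<Rightarrow> real \<Rightarrow> (nat \<Rightarrow> real) \<Rightarrow> real mat" where
  "jac N h u = mat N N (\<lambda>(k, l). jac_entry N h u k l)"

definition ueps :: "nat \<Rightarrow> nat \<Rightarrow> real \<Rightarrow> real \<Rightarrow> real \<Rightarrow> (nat \<Rightarrow> real) \<Rightarrow> real \<Rightarrow> nat \<Rightarrow> real" where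
  "ueps N i h dp dm U \<epsilon> k =
     (if k = i then \<epsilon>
      else if k = (i + 1) mod N then dp * h + \<epsilon>
      else if k = (i + N - 1) mod N then dm * h + \<epsilon>
      else U k + \<epsilon>)"


definition mat_trace :: "'a::comm_monoid_add mat \<Rightarrow> 'a" where
  "mat_trace A = (\<Sum>k<dim_row A. A $$ (k, k))"

end

theory Submission
  imports Defs "HOL-Real_Asymp.Real_Asymp"
begin

(*
  Put \<delta>\<^sub>+ = dp, \<delta>\<^sub>- = dm and r\<^sub>\<plusminus> = (\<delta>\<^sub>\<plusminus> h + \<epsilon>) / \<epsilon>. At the degenerate site the
  diagonal Jacobian entry is J\<^sub>i\<^sub>i = (G r\<^sub>- - G r\<^sub>+) / h with G r = (r - 1 - ln r) / (ln r)\<^sup>2,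
  and G r \<sim> r / (ln r)\<^sup>2, so for \<delta>\<^sub>+ \<noteq> \<delta>\<^sub>- the entry J\<^sub>i\<^sub>i is of exact order
  1 / (\<epsilon> (ln \<epsilon>)\<^sup>2). Every entry J\<^sub>k\<^sub>l is bounded by a multiple of max 1 (max u / u\<^sub>l), so
  only column i grows, like 1 / \<epsilon>, and every product J\<^sub>k\<^sub>l J\<^sub>l\<^sub>k with (k, l) \<noteq> (i, i) is
  O(1 / \<epsilon>). Hence tr (J\<^sup>2) = \<Sum> J\<^sub>k\<^sub>l J\<^sub>l\<^sub>k \<ge> J\<^sub>i\<^sub>i\<^sup>2 - O(1 / \<epsilon>) diverges. By Schur
  triangularisation tr (J\<^sup>2) is the sum of the squared eigenvalues, whence
  \<bar>tr (J\<^sup>2)\<bar> \<le> N \<rho>(J)\<^sup>2.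
*)

section \<open>Derivatives of the logarithmic mean\<close>

text \<open>The partial derivatives of logmean at (1, r), continuously extended to r = 1.\<close>

definition logmean_d1 :: "real \<Rightarrow> real" where
  "logmean_d1 r = (if r = 1 then 1/2 else (r - 1 - ln r) / (ln r)^2)"

definition logmean_d2 :: "real \<Rightarrow> real" where
  "logmean_d2 r = (if r = 1 then 1/2 else (ln r - 1 + 1/r) / (ln r)^2)"

lemma logmean_homogeneous:
  assumes "a > 0" "t > 0"
  shows "logmean a t = a * logmean 1 (t / a)"
proof (cases "t = a")
  case False
  then have "t / a \<noteq> 1" using assms by simp
  with False assms show ?thesis
    by (simp add: logmean_def ln_div field_simps)
qed (use assms in \<open>simp add: logmean_def\<close>)

lemma has_real_derivative_logmean_one_snd:
  assumes "s > 0"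
  shows "(logmean 1 has_real_derivative logmean_d2 s) (at s)"
proof (cases "s = 1")
  case False
  have "((\<lambda>x. (x - 1) / ln x) has_real_derivative (1 * ln s - (s - 1) * (1 / s)) / (ln s * ln s)) (at s)"
    using assms False by (auto intro!: derivative_eq_intros)
  moreover have "(1 * ln s - (s - 1) * (1 / s)) / (ln s * ln s) = logmean_d2 s"
    using assms False by (simp add: logmean_d2_def field_simps power2_eq_square)
  ultimately have "((\<lambda>x. (x - 1) / ln x) has_real_derivative logmean_d2 s) (at s)"
    by simp
  then show ?thesis
    by (rule has_field_derivative_transform_within_open[where S = "{0<..} - {1}"])
       (use assms False in \<open>auto simp: logmean_def\<close>)
next
  case True
  have "((\<lambda>y::real. ((y - 1) / ln y - 1) / (y - 1)) \<longlongrightarrow> 1/2) (at 1)"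
    by real_asymp
  moreover have "eventually (\<lambda>y. ((y - 1) / ln y - 1) / (y - 1) = (logmean 1 y - logmean 1 1) / (y - 1)) (at 1)"
    by (auto simp: logmean_def eventually_at_filter)
  ultimately have "((\<lambda>y. (logmean 1 y - logmean 1 1) / (y - 1)) \<longlongrightarrow> 1/2) (at 1)"
    by (rule Lim_transform_eventually)
  then show ?thesis
    using True by (simp add: has_field_derivative_iff logmean_d2_def)
qed

lemma logmean_one_eq_d1_plus_d2:
  assumes "r > 0"
  shows "logmean 1 r = logmean_d1 r + r * logmean_d2 r"
proof (cases "r = 1")
  case False
  then have l: "ln r \<noteq> 0" using assms by simp
  have "r * logmean_d2 r = (r * ln r - r + 1) / (ln r)^2"
    using False assms by (simp add: logmean_d2_def field_simps)
  then have "logmean_d1 r + r * logmean_d2 r = (r * ln r - ln r) / (ln r)^2"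
    using False by (simp add: logmean_d1_def add_divide_distrib[symmetric])
  also have "\<dots> = (r - 1) / ln r"
    using l by (simp add: power2_eq_square field_simps)
  finally show ?thesis
    using False by (simp add: logmean_def)
qed (simp add: logmean_def logmean_d1_def logmean_d2_def)

lemma has_real_derivative_logmean_snd:
  assumes "a > 0" "t > 0"
  shows "((\<lambda>x. logmean a x) has_real_derivative logmean_d2 (t / a)) (at t)"
proof -
  have "(logmean 1 has_real_derivative logmean_d2 (t / a)) (at (t / a))"
    using assms by (intro has_real_derivative_logmean_one_snd) simp
  moreover have "((\<lambda>x. x / a) has_real_derivative 1 / a) (at t)"
    using assms by (auto intro!: derivative_eq_intros)
  ultimately have "((\<lambda>x. a * logmean 1 (x / a)) has_real_derivative a * (logmean_d2 (t / a) * (1 / a))) (at t)"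
    by (intro DERIV_cmult DERIV_chain2)
  then have "((\<lambda>x. a * logmean 1 (x / a)) has_real_derivative logmean_d2 (t / a)) (at t)"
    using assms by simp
  then show ?thesis
    by (rule has_field_derivative_transform_within_open[where S = "{0<..}"])
       (use assms in \<open>auto simp: logmean_homogeneous[of a]\<close>)
qed

lemma has_real_derivative_logmean_fst:
  assumes "b > 0" "t > 0"
  shows "((\<lambda>x. logmean x b) has_real_derivative logmean_d1 (b / t)) (at t)"
proof -
  have "(logmean 1 has_real_derivative logmean_d2 (b / t)) (at (b / t))"
    using assms by (intro has_real_derivative_logmean_one_snd) simp
  moreover have "((\<lambda>x. b / x) has_real_derivative - (b / t) / t) (at t)"
    using assms by (auto intro!: derivative_eq_intros simp: power2_eq_square)
  ultimately have "((\<lambda>x. x * logmean 1 (b / x)) has_real_derivative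
          t * (logmean_d2 (b / t) * (- (b / t) / t)) + 1 * logmean 1 (b / t)) (at t)"
    by (rule DERIV_mult'[OF DERIV_ident DERIV_chain2])
  moreover have "t * (logmean_d2 (b / t) * (- (b / t) / t)) + 1 * logmean 1 (b / t) = logmean_d1 (b / t)"
    using assms logmean_one_eq_d1_plus_d2[of "b / t"] by simp
  ultimately have "((\<lambda>x. x * logmean 1 (b / x)) has_real_derivative logmean_d1 (b / t)) (at t)"
    by simp
  then show ?thesis
    by (rule has_field_derivative_transform_within_open[where S = "{0<..}"])
       (use assms in \<open>auto simp: logmean_homogeneous[of _ b]\<close>)
qed

lemma logmean_d1_nonneg: "r > 0 \<Longrightarrow> logmean_d1 r \<ge> 0"
  using ln_le_minus_one[of r] by (simp add: logmean_d1_def)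

lemma ln_ge_one_minus_inverse: "r > 0 \<Longrightarrow> 1 - 1 / r \<le> ln (r::real)"
  using ln_le_minus_one[of "1 / r"] by (simp add: ln_div)

lemma logmean_d2_nonneg: "r > 0 \<Longrightarrow> logmean_d2 r \<ge> 0"
  using ln_ge_one_minus_inverse[of r] by (simp add: logmean_d2_def)

lemma logmean_one_le_max:
  assumes "r > 0"
  shows "logmean 1 r \<le> max 1 r"
proof (cases r "1::real" rule: linorder_cases)
  case less
  then have "ln r < 0" using assms by simp
  with less assms ln_le_minus_one[of r] show ?thesis
    by (simp add: logmean_def divide_le_eq)
next
  case greater
  then have "ln r > 0" by simp
  with greater assms ln_ge_one_minus_inverse[of r] show ?thesis
    by (simp add: logmean_def divide_le_eq field_simps)
qed (simp add: logmean_def)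

lemma logmean_d1_le: "r > 0 \<Longrightarrow> logmean_d1 r \<le> max 1 r"
  using logmean_one_eq_d1_plus_d2[of r] logmean_one_le_max[of r]
    mult_nonneg_nonneg[of r "logmean_d2 r"] logmean_d2_nonneg[of r]
  by linarith

lemma logmean_d2_le:
  assumes "r > 0"
  shows "logmean_d2 r \<le> max 1 (1 / r)"
proof -
  have "r * logmean_d2 r \<le> max 1 r"
    using assms logmean_one_eq_d1_plus_d2[of r] logmean_one_le_max[of r] logmean_d1_nonneg[of r]
    by linarith
  then have "logmean_d2 r \<le> max 1 r / r"
    using assms by (simp add: le_divide_eq mult.commute)
  also have "max 1 r / r = max 1 (1 / r)"
    using assms by (auto simp: max_def)
  finally show ?thesis .
qed

section \<open>The Jacobian of the central-difference residual\<close>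

lemma succ_pred_mod_distinct:
  fixes N k :: nat
  assumes "N \<ge> 3" "k < N"
  shows "(k + 1) mod N \<noteq> k" "(k + N - 1) mod N \<noteq> k" "(k + 1) mod N \<noteq> (k + N - 1) mod N"
  using assms by (auto simp: mod_if)

lemma abs_Dmat_le: "h > 0 \<Longrightarrow> \<bar>Dmat N h k j\<bar> \<le> 1 / (2 * h)"
  by (simp add: Dmat_def)

lemma sum_Dmat_mult:
  assumes "N \<ge> 3" "k < N"
  shows "(\<Sum>j<N. Dmat N h k j * f j) = (f ((k + 1) mod N) - f ((k + N - 1) mod N)) / (2 * h)"
proof -
  let ?p = "(k + 1) mod N" and ?m = "(k + N - 1) mod N"
  have pm: "?p \<noteq> ?m" "?p < N" "?m < N"
    using succ_pred_mod_distinct[OF assms] assms by auto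
  have "(\<Sum>j<N. Dmat N h k j * f j)
      = (\<Sum>j<N. (if j = ?p then f j / (2 * h) else 0) + (if j = ?m then - f j / (2 * h) else 0))"
    by (rule sum.cong) (use pm in \<open>auto simp: Dmat_def\<close>)
  also have "\<dots> = f ?p / (2 * h) - f ?m / (2 * h)"
    using pm by (simp add: sum.distrib)
  finally show ?thesis
    by (simp add: diff_divide_distrib)
qed

lemma jac_entry_diag:
  assumes N: "N \<ge> 3" and pos: "\<And>j. j < N \<Longrightarrow> u j > 0" and k: "k < N"
  shows "jac_entry N h u k k
           = (logmean_d1 (u ((k + N - 1) mod N) / u k) - logmean_d1 (u ((k + 1) mod N) / u k)) / h"
proof -
  let ?p = "(k + 1) mod N" and ?m = "(k + N - 1) mod N"
  have pm: "?p \<noteq> k" "?m \<noteq> k" "?p < N" "?m < N"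
    using succ_pred_mod_distinct[OF N k] N by auto
  have R: "Rres N h (u(k := t)) k = (logmean t (u ?m) - logmean t (u ?p)) / h" for t
  proof -
    have "Rres N h (u(k := t)) k = -2 * ((logmean t (u ?p) - logmean t (u ?m)) / (2 * h))"
      unfolding Rres_def sum_Dmat_mult[OF N k] using pm by simp
    also have "\<dots> = (logmean t (u ?m) - logmean t (u ?p)) / h"
      by (simp add: divide_simps)
    finally show ?thesis .
  qed
  have "((\<lambda>t. (logmean t (u ?m) - logmean t (u ?p)) / h) has_real_derivative
          (logmean_d1 (u ?m / u k) - logmean_d1 (u ?p / u k)) / h) (at (u k))"
    using pos pm k by (intro DERIV_cdivide DERIV_diff has_real_derivative_logmean_fst) auto
  then show ?thesis
    unfolding jac_entry_def R by (rule DERIV_imp_deriv)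
qed

lemma jac_entry_offdiag:
  assumes pos: "\<And>j. j < N \<Longrightarrow> u j > 0" and k: "k < N" and l: "l < N" and "k \<noteq> l"
  shows "jac_entry N h u k l = -2 * Dmat N h k l * logmean_d2 (u l / u k)"
proof -
  have R: "(\<lambda>t. Rres N h (u(l := t)) k)
         = (\<lambda>t. -2 * (\<Sum>j<N. Dmat N h k j * logmean (u k) ((u(l := t)) j)))"
    unfolding Rres_def using \<open>k \<noteq> l\<close> by simp
  have "((\<lambda>t. -2 * (\<Sum>j<N. Dmat N h k j * logmean (u k) ((u(l := t)) j))) has_real_derivative
          -2 * (\<Sum>j<N. if j = l then Dmat N h k l * logmean_d2 (u l / u k) else 0)) (at (u l))"
  proof (intro DERIV_cmult DERIV_sum)
    fix j
    show "((\<lambda>t. Dmat N h k j * logmean (u k) ((u(l := t)) j)) has_real_derivative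
            (if j = l then Dmat N h k l * logmean_d2 (u l / u k) else 0)) (at (u l))"
      using pos k l by (cases "j = l") (auto intro!: DERIV_cmult has_real_derivative_logmean_snd)
  qed
  then show ?thesis
    unfolding jac_entry_def R using l by (simp add: DERIV_imp_deriv)
qed

lemma abs_jac_entry_le:
  assumes N: "N \<ge> 3" and h: "h > 0" and pos: "\<And>j. j < N \<Longrightarrow> u j > 0"
    and bound: "\<And>j. j < N \<Longrightarrow> u j \<le> M" and k: "k < N" and l: "l < N"
  shows "\<bar>jac_entry N h u k l\<bar> \<le> 2 / h * max 1 (M / u l)"
proof -
  have ratio: "max 1 (u j / u l) \<le> max 1 (M / u l)" if "j < N" for j
  proof -
    have "u j / u l \<le> M / u l"
      using bound[OF that] pos[OF l] by (simp add: divide_right_mono)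
    then show ?thesis
      by (auto simp: le_max_iff_disj)
  qed
  show ?thesis
  proof (cases "k = l")
    case True
    let ?a = "logmean_d1 (u ((l + N - 1) mod N) / u l)" and ?b = "logmean_d1 (u ((l + 1) mod N) / u l)"
    have d1: "0 \<le> logmean_d1 (u j / u l)" "logmean_d1 (u j / u l) \<le> max 1 (M / u l)" if "j < N" for j
      using logmean_d1_nonneg logmean_d1_le[of "u j / u l"] ratio[OF that] pos[OF that] pos[OF l]
      by auto
    have "?a \<ge> 0" "?b \<ge> 0" "?a \<le> max 1 (M / u l)" "?b \<le> max 1 (M / u l)"
      using d1[of "(l + N - 1) mod N"] d1[of "(l + 1) mod N"] N by auto
    then have "\<bar>?a - ?b\<bar> \<le> 2 * max 1 (M / u l)"
      by (simp add: abs_le_iff)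
    then show ?thesis
      using jac_entry_diag[OF N pos l] True h by (simp add: abs_divide divide_right_mono)
  next
    case False
    have d2: "0 \<le> logmean_d2 (u l / u k)" "logmean_d2 (u l / u k) \<le> max 1 (u k / u l)"
      using logmean_d2_nonneg logmean_d2_le[of "u l / u k"] pos k l by auto
    have "\<bar>jac_entry N h u k l\<bar> = 2 * \<bar>Dmat N h k l\<bar> * logmean_d2 (u l / u k)"
      using jac_entry_offdiag[OF pos k l False] d2 by (simp add: abs_mult)
    also have "\<dots> \<le> 2 * (1 / (2 * h)) * max 1 (u k / u l)"
      using abs_Dmat_le[OF h] d2 h by (intro mult_mono) auto
    also have "\<dots> \<le> 2 / h * max 1 (M / u l)"
    proof -
      have "max 1 (u k / u l) \<le> 2 * max 1 (M / u l)"
        using ratio[OF k] by (auto simp: max_def)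
      then show ?thesis
        using h by (simp add: divide_right_mono)
    qed
    finally show ?thesis .
  qed
qed

lemma jac_carrier_mat: "jac N h u \<in> carrier_mat N N"
  by (simp add: jac_def)

lemma index_jac: "k < N \<Longrightarrow> l < N \<Longrightarrow> jac N h u $$ (k, l) = jac_entry N h u k l"
  by (simp add: jac_def)

section \<open>Trace of the square and spectral radius\<close>

lemma mat_trace_mult:
  assumes "A \<in> carrier_mat n m" "B \<in> carrier_mat m n"
  shows "mat_trace (A * B) = (\<Sum>i<n. \<Sum>j<m. A $$ (i, j) * B $$ (j, i))"
  using assms unfolding mat_trace_def
  by (intro sum.cong) (auto simp: scalar_prod_def atLeast0LessThan)

lemma mat_trace_mult_comm:
  fixes A B :: "'a::comm_semiring_0 mat"
  assumes "A \<in> carrier_mat n m" "B \<in> carrier_mat m n"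
  shows "mat_trace (A * B) = mat_trace (B * A)"
  unfolding mat_trace_mult[OF assms] mat_trace_mult[OF assms(2,1)]
  by (subst sum.swap) (simp add: mult.commute)

lemma mat_trace_similar:
  fixes A B :: "'a::comm_ring_1 mat"
  assumes "similar_mat_wit A B P Q"
  shows "mat_trace A = mat_trace B"
proof -
  obtain n where carr: "{A, B, P, Q} \<subseteq> carrier_mat n n"
    and QP: "Q * P = 1\<^sub>m n" and A: "A = P * B * Q"
    using assms unfolding similar_mat_wit_def Let_def by blast
  then have "mat_trace A = mat_trace (P * (B * Q))"
    by (simp add: assoc_mult_mat[of _ n n _ n _ n])
  also have "\<dots> = mat_trace (B * Q * P)"
    using carr by (subst mat_trace_mult_comm[of _ n n]) auto
  also have "\<dots> = mat_trace B"
    using carr QP right_mult_one_mat[of B n n] by (simp add: assoc_mult_mat[of _ n n _ n _ n])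
  finally show ?thesis .
qed

lemma mat_trace_square_upper_triangular:
  fixes B :: "'a::comm_semiring_1 mat"
  assumes B: "B \<in> carrier_mat n n" and "upper_triangular B"
  shows "mat_trace (B * B) = (\<Sum>i<n. (B $$ (i, i))^2)"
proof -
  have "B $$ (i, j) * B $$ (j, i) = (if j = i then (B $$ (i, i))^2 else 0)" if "i < n" "j < n" for i j
    using assms that
    by (cases i j rule: linorder_cases) (auto simp: power2_eq_square upper_triangular_def)
  then have "(\<Sum>j<n. B $$ (i, j) * B $$ (j, i)) = (B $$ (i, i))^2" if "i < n" for i
    using that by (simp add: sum.cong[of "{..<n}" _ _ "\<lambda>j. if j = i then (B $$ (i, i))^2 else 0"])
  then show ?thesis
    unfolding mat_trace_mult[OF B B] by simp
qed

lemma norm_mat_trace_square_le: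
  fixes A :: "complex mat"
  assumes A: "A \<in> carrier_mat n n" and "n > 0"
  shows "cmod (mat_trace (A * A)) \<le> real n * (spectral_radius A)^2"
proof -
  obtain es where cp: "char_poly A = (\<Prod>a\<leftarrow>es. [:- a, 1:])" and len: "length es = n"
    using char_poly_factorized[OF A] by auto
  obtain B P Q where "schur_decomposition A es = (B, P, Q)"
    by (cases "schur_decomposition A es") auto
  with schur_decomposition[OF A cp]
  have sim: "similar_mat_wit A B P Q" and ut: "upper_triangular B" and dg: "diag_mat B = es"
    by auto
  have B: "B \<in> carrier_mat n n"
    using similar_mat_witD2[OF A sim] by auto
  have "mat_trace (A * A) = mat_trace (B * B)"
    using mat_trace_similar[OF similar_mat_wit_pow[OF sim, of 2]] A B
    by (simp add: numeral_2_eq_2)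
  also have "\<dots> = (\<Sum>i<n. (es ! i)^2)"
    using B unfolding mat_trace_square_upper_triangular[OF B ut] dg[symmetric] diag_mat_def
    by simp
  finally have tr: "mat_trace (A * A) = (\<Sum>i<n. (es ! i)^2)" .
  have eigenvalue: "cmod (es ! i) \<le> spectral_radius A" if "i < n" for i
  proof -
    have "poly (char_poly A) (es ! i) = 0"
      using nth_mem[of i es] that len unfolding cp
      by (induction es) (auto simp: poly_prod_list)
    then show ?thesis
      using spectrum_root_char_poly[OF A] spectral_radius_mem_max(2)[OF A \<open>n > 0\<close>] by auto
  qed
  have "cmod (mat_trace (A * A)) \<le> (\<Sum>i<n. cmod (es ! i)^2)"
    unfolding tr by (rule order.trans[OF norm_sum]) (simp add: norm_power)
  also have "\<dots> \<le> (\<Sum>i<n. (spectral_radius A)^2)"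
    using eigenvalue by (intro sum_mono power_mono) auto
  finally show ?thesis
    by simp
qed

lemma spectral_radius_ge_sqrt_trace_square:
  fixes A :: "real mat"
  assumes A: "A \<in> carrier_mat n n" and n: "n > 0"
  shows "sqrt (\<bar>mat_trace (A * A)\<bar> / real n) \<le> spectral_radius (map_mat complex_of_real A)"
proof -
  let ?A = "map_mat complex_of_real A"
  have "?A * ?A = map_mat complex_of_real (A * A)"
    by (rule of_real_hom.mat_hom_mult[OF A A, symmetric])
  then have "mat_trace (?A * ?A) = complex_of_real (mat_trace (A * A))"
    using A unfolding mat_trace_def by (simp add: of_real_sum)
  then have "\<bar>mat_trace (A * A)\<bar> \<le> real n * (spectral_radius ?A)^2"
    using norm_mat_trace_square_le[of ?A n] A n by simp
  then have "\<bar>mat_trace (A * A)\<bar> / real n \<le> (spectral_radius ?A)^2"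
    using n by (simp add: divide_le_eq mult.commute)
  moreover have "spectral_radius ?A \<ge> 0"
    using spectral_radius_mem_max(1)[of ?A n] A n by auto
  ultimately show ?thesis
    by (rule real_le_lsqrt[rotated])
qed

lemma mat_trace_square_ge:
  fixes A :: "real mat"
  assumes A: "A \<in> carrier_mat n n" and i: "i < n" and "c \<ge> 0"
    and off: "\<And>k l. k < n \<Longrightarrow> l < n \<Longrightarrow> (k, l) \<noteq> (i, i) \<Longrightarrow> \<bar>A $$ (k, l) * A $$ (l, k)\<bar> \<le> c"
  shows "mat_trace (A * A) \<ge> (A $$ (i, i))^2 - real n * real n * c"
proof -
  let ?a = "\<lambda>k l. if (k, l) = (i, i) then (A $$ (i, i))^2 else 0"
  have "(\<Sum>l<n. ?a k l) = (if k = i then (A $$ (i, i))^2 else 0)" for k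
    using i by (cases "k = i") simp_all
  then have "(A $$ (i, i))^2 - real n * real n * c = (\<Sum>k<n. \<Sum>l<n. ?a k l - c)"
    using i by (simp add: sum_subtractf)
  also have "\<dots> \<le> (\<Sum>k<n. \<Sum>l<n. A $$ (k, l) * A $$ (l, k))"
    using off \<open>c \<ge> 0\<close> by (intro sum_mono) (force simp: power2_eq_square abs_le_iff)
  finally show ?thesis
    unfolding mat_trace_mult[OF A A] .
qed

section \<open>Blow-up at a state with a single zero\<close>

lemma abs_jac_entry_le_single_zero:
  assumes N: "N \<ge> 3" and h: "h > 0" and i: "i < N"
    and zero: "b i = 0" and pos: "\<And>k. k < N \<Longrightarrow> k \<noteq> i \<Longrightarrow> b k > 0"
  obtains c where "c \<ge> 0"
    and "\<And>e k l. 0 < e \<Longrightarrow> e \<le> 1 \<Longrightarrow> k < N \<Longrightarrow> l < N \<Longrightarrow>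
           \<bar>jac_entry N h (\<lambda>j. b j + e) k l\<bar> \<le> (if l = i then c / e else c)"
proof -
  have nonneg: "b k \<ge> 0" if "k < N" for k
    using pos[OF that] zero by (cases "k = i") auto
  define M where "M = 1 + (\<Sum>k<N. b k)"
  have M: "b k + 1 \<le> M" if "k < N" for k
  proof -
    have "b k \<le> (\<Sum>k<N. b k)"
      using that nonneg by (intro member_le_sum) auto
    then show ?thesis
      unfolding M_def by simp
  qed
  have "(i + 1) mod N \<in> {..<N} - {i}"
    using succ_pred_mod_distinct(1)[OF N i] N by auto
  then have "Min (b ` ({..<N} - {i})) > 0"
    using pos by (subst Min_gr_iff) auto
  define m where "m = min 1 (Min (b ` ({..<N} - {i})))"
  have m: "0 < m" "m \<le> 1" "\<And>k. k < N \<Longrightarrow> k \<noteq> i \<Longrightarrow> m \<le> b k"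
    using \<open>Min _ > 0\<close> unfolding m_def by (auto intro: min.coboundedI2)
  have "M \<ge> 1"
    using M[OF i] zero by simp
  define c where "c = 2 / h * (M / m)"
  show thesis
  proof (rule that)
    show "c \<ge> 0"
      unfolding c_def using \<open>M \<ge> 1\<close> h m by simp
    fix e :: real and k l :: nat
    assume e: "0 < e" "e \<le> 1" and kl: "k < N" "l < N"
    have "b j + e > 0" "b j + e \<le> M" if "j < N" for j
      using nonneg[OF that] M[OF that] e by auto
    then have "\<bar>jac_entry N h (\<lambda>j. b j + e) k l\<bar> \<le> 2 / h * max 1 (M / (b l + e))"
      using kl by (intro abs_jac_entry_le[OF N h]) auto
    also have "\<dots> \<le> (if l = i then c / e else c)"
    proof (cases "l = i")
      case True
      have "max 1 (M / e) = M / e"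
        using \<open>M \<ge> 1\<close> e by (simp add: le_divide_eq)
      also have "\<dots> \<le> M / m / e"
        using \<open>M \<ge> 1\<close> e m by (intro divide_right_mono) (simp_all add: le_divide_eq)
      finally have "2 / h * max 1 (M / e) \<le> 2 / h * (M / m / e)"
        using h by (intro mult_left_mono) simp_all
      then show ?thesis
        using True zero unfolding c_def by simp
    next
      case False
      have "M / (b l + e) \<le> M / m"
        using \<open>M \<ge> 1\<close> e m(1) m(3)[OF kl(2) False] by (intro divide_left_mono) auto
      moreover have "1 \<le> M / m"
        using \<open>M \<ge> 1\<close> m by (simp add: le_divide_eq)
      ultimately have "max 1 (M / (b l + e)) \<le> M / m"
        by simp
      then have "2 / h * max 1 (M / (b l + e)) \<le> 2 / h * (M / m)"
        using h by (intro mult_left_mono) simp_all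
      then show ?thesis
        using False unfolding c_def by simp
    qed
    finally show "\<bar>jac_entry N h (\<lambda>j. b j + e) k l\<bar> \<le> (if l = i then c / e else c)" .
  qed
qed

lemma mat_trace_square_jac_ge_single_zero:
  assumes N: "N \<ge> 3" and h: "h > 0" and i: "i < N"
    and zero: "b i = 0" and pos: "\<And>k. k < N \<Longrightarrow> k \<noteq> i \<Longrightarrow> b k > 0"
  obtains C where "\<And>e. 0 < e \<Longrightarrow> e \<le> 1 \<Longrightarrow>
           mat_trace (jac N h (\<lambda>j. b j + e) * jac N h (\<lambda>j. b j + e))
             \<ge> (jac_entry N h (\<lambda>j. b j + e) i i)^2 - C / e"
proof -
  obtain c where "c \<ge> 0" and c: "\<And>e k l. 0 < e \<Longrightarrow> e \<le> 1 \<Longrightarrow> k < N \<Longrightarrow> l < N \<Longrightarrow>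
      \<bar>jac_entry N h (\<lambda>j. b j + e) k l\<bar> \<le> (if l = i then c / e else c)"
    using abs_jac_entry_le_single_zero[where b = b, OF N h i zero pos] by blast
  show thesis
  proof (rule that[of "real N * real N * c^2"])
    fix e :: real
    assume e: "0 < e" "e \<le> 1"
    let ?J = "jac N h (\<lambda>j. b j + e)"
    have "c * c \<le> c * c / e"
      using \<open>c \<ge> 0\<close> e by (simp add: le_divide_eq mult_left_le)
    have "\<bar>?J $$ (k, l) * ?J $$ (l, k)\<bar> \<le> c^2 / e"
      if kl: "k < N" "l < N" "(k, l) \<noteq> (i, i)" for k l
    proof -
      have "\<bar>?J $$ (k, l) * ?J $$ (l, k)\<bar>
          \<le> (if l = i then c / e else c) * (if k = i then c / e else c)"
        unfolding abs_mult index_jac[OF kl(1,2)] index_jac[OF kl(2,1)]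
        using c[OF e kl(1,2)] c[OF e kl(2,1)] \<open>c \<ge> 0\<close> e by (intro mult_mono) auto
      also have "\<dots> \<le> c^2 / e"
        using kl(3) \<open>c * c \<le> c * c / e\<close> e
        by (auto simp: power2_eq_square mult_left_mono mult_right_mono)
      finally show ?thesis .
    qed
    then have "mat_trace (?J * ?J) \<ge> (?J $$ (i, i))^2 - real N * real N * (c^2 / e)"
      using e i by (intro mat_trace_square_ge[OF jac_carrier_mat i]) auto
    then show "mat_trace (?J * ?J) \<ge> (jac_entry N h (\<lambda>j. b j + e) i i)^2 - real N * real N * c^2 / e"
      using i by (simp add: index_jac)
  qed
qed

lemma filterlim_logmean_d1_formula_diff_square:
  fixes a b C :: real
  assumes "a > b" "b > 0"
  shows "filterlim (\<lambda>e. ((((a + e) / e) - 1 - ln ((a + e) / e)) / (ln ((a + e) / e))^2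
      - (((b + e) / e) - 1 - ln ((b + e) / e)) / (ln ((b + e) / e))^2)^2 - C / e) at_top (at_right 0)"
  using assms by real_asymp

lemma filterlim_logmean_d1_diff_square:
  fixes a b C :: real
  assumes "a > 0" "b > 0" "a \<noteq> b"
  shows "filterlim (\<lambda>e. (logmean_d1 ((a + e) / e) - logmean_d1 ((b + e) / e))^2 - C / e) at_top (at_right 0)"
proof -
  have *: "filterlim (\<lambda>e. (logmean_d1 ((a + e) / e) - logmean_d1 ((b + e) / e))^2 - C / e) at_top (at_right 0)"
    if "a > b" "b > 0" for a b :: real
  proof -
    have "eventually (\<lambda>e. ((((a + e) / e) - 1 - ln ((a + e) / e)) / (ln ((a + e) / e))^2
        - (((b + e) / e) - 1 - ln ((b + e) / e)) / (ln ((b + e) / e))^2)^2 - C / e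
        = (logmean_d1 ((a + e) / e) - logmean_d1 ((b + e) / e))^2 - C / e) (at_right 0)"
      using eventually_at_right_less[of 0]
      by eventually_elim (use that in \<open>auto simp: logmean_d1_def\<close>)
    from filterlim_cong[OF refl refl this] filterlim_logmean_d1_formula_diff_square[where C = C, OF that]
    show ?thesis
      by simp
  qed
  show ?thesis
    using assms *[of a b] *[of b a] by (cases "a > b") (simp_all add: power2_commute)
qed

lemma ueps_eq_shift: "ueps N i h dp dm U e = (\<lambda>k. ueps N i h dp dm U 0 k + e)"
  by (auto simp: ueps_def)

lemma jac_entry_ueps_diag:
  fixes N i :: nat and h dp dm :: real and U :: "nat \<Rightarrow> real"
  assumes N: "N \<ge> 3" and h: "h > 0" and i: "i < N" and "dp > 0" and "dm > 0"
    and U: "\<And>k. k < N \<Longrightarrow> k \<noteq> i \<Longrightarrow> k \<noteq> (i + 1) mod N \<Longrightarrow> k \<noteq> (i + N - 1) mod N \<Longrightarrow> U k > 0"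
    and "e > 0"
  shows "jac_entry N h (ueps N i h dp dm U e) i i
           = (logmean_d1 ((dm * h + e) / e) - logmean_d1 ((dp * h + e) / e)) / h"
proof -
  have "ueps N i h dp dm U e k > 0" if "k < N" for k
    using U[OF that] h \<open>dp > 0\<close> \<open>dm > 0\<close> \<open>e > 0\<close> by (auto simp: ueps_def intro: add_pos_pos)
  then show ?thesis
    using succ_pred_mod_distinct[OF N i] by (simp add: jac_entry_diag[OF N _ i] ueps_def)
qed

lemma filterlim_abs_trace_jac_square_ueps:
  fixes N i :: nat and h dp dm :: real and U :: "nat \<Rightarrow> real"
  assumes N: "N \<ge> 3" and h: "h > 0" and i: "i < N"
    and "dp > 0" and "dm > 0" and "dp \<noteq> dm"
    and U: "\<And>k. k < N \<Longrightarrow> k \<noteq> i \<Longrightarrow> k \<noteq> (i + 1) mod N \<Longrightarrow> k \<noteq> (i + N - 1) mod N \<Longrightarrow> U k > 0"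
  shows "filterlim (\<lambda>e. \<bar>mat_trace (jac N h (ueps N i h dp dm U e) * jac N h (ueps N i h dp dm U e))\<bar>)
           at_top (at_right 0)"
proof -
  let ?u = "ueps N i h dp dm U"
  have zero: "?u 0 i = 0" and pos: "\<And>k. k < N \<Longrightarrow> k \<noteq> i \<Longrightarrow> ?u 0 k > 0"
    using U h \<open>dp > 0\<close> \<open>dm > 0\<close> by (auto simp: ueps_def)
  from mat_trace_square_jac_ge_single_zero[where b = "?u 0", OF N h i zero pos]
  obtain C where C0: "\<And>e. 0 < e \<Longrightarrow> e \<le> 1 \<Longrightarrow>
      mat_trace (jac N h (\<lambda>k. ?u 0 k + e) * jac N h (\<lambda>k. ?u 0 k + e))
        \<ge> (jac_entry N h (\<lambda>k. ?u 0 k + e) i i)^2 - C / e"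
    by blast
  have C: "mat_trace (jac N h (?u e) * jac N h (?u e)) \<ge> (jac_entry N h (?u e) i i)^2 - C / e"
    if "0 < e" "e \<le> 1" for e
    using C0[OF that] unfolding ueps_eq_shift[of N i h dp dm U e] .
  have unit_interval: "eventually (\<lambda>e. e \<in> {0<..<1}) (at_right (0::real))"
    by (rule eventually_at_right_real) simp
  have "filterlim (\<lambda>e. (logmean_d1 ((dm * h + e) / e) - logmean_d1 ((dp * h + e) / e))^2 - h^2 * C / e)
          at_top (at_right 0)"
    using h \<open>dp > 0\<close> \<open>dm > 0\<close> \<open>dp \<noteq> dm\<close> by (intro filterlim_logmean_d1_diff_square) auto
  then have "filterlim (\<lambda>e. (1 / h^2) * ((logmean_d1 ((dm * h + e) / e) - logmean_d1 ((dp * h + e) / e))^2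
          - h^2 * C / e)) at_top (at_right 0)"
    using h by (intro filterlim_tendsto_pos_mult_at_top[OF tendsto_const]) simp_all
  moreover have "eventually (\<lambda>e. (1 / h^2) * ((logmean_d1 ((dm * h + e) / e) - logmean_d1 ((dp * h + e) / e))^2
          - h^2 * C / e) \<le> \<bar>mat_trace (jac N h (?u e) * jac N h (?u e))\<bar>) (at_right 0)"
    using unit_interval
  proof eventually_elim
    case (elim e)
    then have "e > 0"
      by simp
    have diag: "jac_entry N h (?u e) i i = (logmean_d1 ((dm * h + e) / e) - logmean_d1 ((dp * h + e) / e)) / h"
      using jac_entry_ueps_diag[OF N h i \<open>dp > 0\<close> \<open>dm > 0\<close> U \<open>e > 0\<close>] .
    have "(1 / h^2) * ((logmean_d1 ((dm * h + e) / e) - logmean_d1 ((dp * h + e) / e))^2 - h^2 * C / e)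
        = (jac_entry N h (?u e) i i)^2 - C / e"
      unfolding diag using h by (simp add: power_divide field_simps)
    also have "\<dots> \<le> \<bar>mat_trace (jac N h (?u e) * jac N h (?u e))\<bar>"
      using C[of e] elim by auto
    finally show ?case .
  qed
  ultimately show ?thesis
    by (rule filterlim_at_top_mono)
qed

theorem mainTheorem12:
  fixes N i :: nat and h dp dm :: real and U :: "nat \<Rightarrow> real"
  assumes "N \<ge> 3" and "h > 0" and "i < N"
    and "dp > 0" and "dm > 0" and "dp \<noteq> dm"
    and "\<And>k. k < N \<Longrightarrow> k \<noteq> i \<Longrightarrow> k \<noteq> (i + 1) mod N \<Longrightarrow> k \<noteq> (i + N - 1) mod N \<Longrightarrow> U k > 0"
  shows "filterlim (\<lambda>\<epsilon>. \<bar>mat_trace (jac N h (ueps N i h dp dm U \<epsilon>) * jac N h (ueps N i h dp dm U \<epsilon>))\<bar>)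
           at_top (at_right 0)
     \<and> (\<forall>\<epsilon>>0. spectral_radius (map_mat complex_of_real (jac N h (ueps N i h dp dm U \<epsilon>)))
              \<ge> sqrt (\<bar>mat_trace (jac N h (ueps N i h dp dm U \<epsilon>) * jac N h (ueps N i h dp dm U \<epsilon>))\<bar> / real N))
     \<and> filterlim (\<lambda>\<epsilon>. spectral_radius (map_mat complex_of_real (jac N h (ueps N i h dp dm U \<epsilon>))))
           at_top (at_right 0)"
proof -
  let ?J = "\<lambda>\<epsilon>. jac N h (ueps N i h dp dm U \<epsilon>)"
  have trace: "filterlim (\<lambda>\<epsilon>. \<bar>mat_trace (?J \<epsilon> * ?J \<epsilon>)\<bar>) at_top (at_right 0)"
    using filterlim_abs_trace_jac_square_ueps[OF assms] .
  have "N > 0"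
    using assms(1) by simp
  have radius: "spectral_radius (map_mat complex_of_real (?J \<epsilon>)) \<ge> sqrt (\<bar>mat_trace (?J \<epsilon> * ?J \<epsilon>)\<bar> / real N)"
    for \<epsilon>
    using spectral_radius_ge_sqrt_trace_square[OF jac_carrier_mat \<open>N > 0\<close>] .
  have "filterlim (\<lambda>\<epsilon>. sqrt ((1 / real N) * \<bar>mat_trace (?J \<epsilon> * ?J \<epsilon>)\<bar>)) at_top (at_right 0)"
    using \<open>N > 0\<close>
    by (intro filterlim_compose[OF sqrt_at_top] filterlim_tendsto_pos_mult_at_top[OF tendsto_const _ trace])
       simp
  then have "filterlim (\<lambda>\<epsilon>. spectral_radius (map_mat complex_of_real (?J \<epsilon>))) at_top (at_right 0)"
    by (rule filterlim_at_top_mono) (use radius in simp)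
  with trace radius show ?thesis
    by blast
qed

end
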